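(* Let $\rho\in[0,1)$, $\boldsymbol x\in\mathbb R^n\setminus\{\boldsymbol 0\}$ and $\boldsymbol g=\boldsymbol 1_m+\boldsymbol e\in\mathcal G_\rho$. Consider the expected objective $F(\boldsymbol\xi,\boldsymbol\gamma)=\mathbb E f(\boldsymbol\xi,\boldsymbol\gamma)=\frac1{2m}\|\boldsymbol\xi\boldsymbol\gamma^\top-\boldsymbol x\boldsymbol g^\top\|_F^2$ on $\mathbb R^n\times\Pi^m_+$, where $\Pi^m_+=\{\boldsymbol v\in\mathbb R^m_+:\boldsymbol 1_m^\top\boldsymbol v=m\}$. Write $\boldsymbol\gamma=\boldsymbol 1_m+\boldsymbol\varepsilon$ with $\boldsymbol\varepsilon\in\boldsymbol 1_m^\perp$. Then the only point $(\boldsymbol\xi,\boldsymbol\gamma)\in\mathbb R^n\times\Pi^m_+$ at which both $$\tfrac1m\big(\|\boldsymbol\gamma\|^2\boldsymbol\xi-(\boldsymbol\gamma^\top\boldsymbol g)\boldsymbol x\big)=\boldsymbol 0\quad\text{and}\quad \tfrac1m\big(\|\boldsymbol\xi\|^2\boldsymbol\varepsilon-(\boldsymbol\xi^\top\boldsymbol x)\boldsymbol e\big)=\boldsymbol 0$$ (i.e. the expected gradient in $\boldsymbol\xi$ and the expected projected gradient in $\boldsymbol\gamma$ vanish) is $(\boldsymbol\xi,\boldsymbol\gamma)=(\boldsymbol x,\boldsymbol g)$. Moreover, the expected projected Hessian at this point, $$\boldsymbol H=\frac1m\begin{pmatrix}\|\boldsymbol g\|^2\boldsymbol I_n & \boldsymbol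 x\boldsymbol e^\top\\ \boldsymbol e\boldsymbol x^\top & \|\boldsymbol x\|^2\boldsymbol P\end{pmatrix},$$ satisfies $\boldsymbol u^\top\boldsymbol H\boldsymbol u>0$ for every nonzero $\boldsymbol u\in\mathcal V:=\mathbb R^n\times\boldsymbol 1_m^\perp$.
   Context: $\boldsymbol 1_m^\perp=\{\boldsymbol v\in\mathbb R^m:\boldsymbol 1_m^\top\boldsymbol v=0\}$ and $\boldsymbol P=\boldsymbol I_m-\frac1m\boldsymbol 1_m\boldsymbol 1_m^\top$ is the orthogonal projector onto it. For $\rho\in[0,1)$, $\mathcal G_\rho=\{\boldsymbol 1_m+\boldsymbol e:\ \boldsymbol e\in\boldsymbol 1_m^\perp,\ \|\boldsymbol e\|_\infty\le\rho\}$. The objective is $f(\boldsymbol\xi,\boldsymbol\gamma)=\frac1{2mp}\sum_{l=1}^p\|\mathrm{diag}(\boldsymbol\gamma)\boldsymbol A_l\boldsymbol\xi-\mathrm{diag}(\boldsymbol g)\boldsymbol A_l\boldsymbol x\|^2$ where the rows of the matrices $\boldsymbol A_l\in\mathbb R^{m\times n}$ are i.i.d. centred isotropic random vectors ($\mathbb E\boldsymbol a\boldsymbol a^\top=\boldsymbol I_n$); its expectation is the $F$ given in the claim. *)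

theory Defs
  imports "HOL-Analysis.Analysis"
begin

text \<open>Vectors in R^n and R^m are modelled as real^'n and real^'m (n = CARD('n), m = CARD('m)).\<close>

definition ones :: "real^'m" where
  "ones = (\<chi> i. 1)"

definition ones_perp :: "(real^'m) set" where
  "ones_perp = {v. ones \<bullet> v = 0}"

definition projP :: "real^'m^'m" where
  "projP = mat 1 - (\<chi> i j. 1 / real CARD('m))"

definition G_rho :: "real \<Rightarrow> (real^'m) set" where
  "G_rho \<rho> = {ones + e | e. e \<in> ones_perp \<and> (\<forall>i. \<bar>e $ i\<bar> \<le> \<rho>)}"

definition Pi_plus :: "(real^'m) set" where
  "Pi_plus = {v. (\<forall>i. 0 \<le> v $ i) \<and> ones \<bullet> v = real CARD('m)}"

definition outer :: "real^'a \<Rightarrow> real^'b \<Rightarrow> real^'b^'a" where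
  "outer a b = (\<chi> i j. a $ i * b $ j)"

definition grad_xi :: "real^'n \<Rightarrow> real^'m \<Rightarrow> real^'n \<Rightarrow> real^'m \<Rightarrow> real^'n" where
  "grad_xi \<xi> \<gamma> x g = (1 / real CARD('m)) *\<^sub>R ((norm \<gamma>)\<^sup>2 *\<^sub>R \<xi> - (\<gamma> \<bullet> g) *\<^sub>R x)"

definition proj_grad_gamma :: "real^'n \<Rightarrow> real^'m \<Rightarrow> real^'n \<Rightarrow> real^'m \<Rightarrow> real^'m" where
  "proj_grad_gamma \<xi> \<gamma> x g =
     (1 / real CARD('m)) *\<^sub>R ((norm \<xi>)\<^sup>2 *\<^sub>R (\<gamma> - ones) - (\<xi> \<bullet> x) *\<^sub>R (g - ones))"

text \<open>Quadratic form u^T H u of the block matrix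
  H = (1/m) [ |g|^2 I_n , x e^T ; e x^T , |x|^2 P ] at u = (u1, u2).\<close>
definition H_quad :: "real^'n \<Rightarrow> real^'m \<Rightarrow> real^'n \<Rightarrow> real^'m \<Rightarrow> real" where
  "H_quad x g u1 u2 = (let e = g - ones in
     (1 / real CARD('m)) *
       (u1 \<bullet> (((norm g)\<^sup>2 *\<^sub>R mat 1) *v u1) + u1 \<bullet> (outer x e *v u2)
        + u2 \<bullet> (outer e x *v u1) + u2 \<bullet> (((norm x)\<^sup>2 *\<^sub>R projP) *v u2)))"

end

theory Submission
  imports Defs
begin

text \<open>At a stationary point the \<open>\<xi>\<close>-equation forces \<open>\<xi> = c x\<close> with \<open>c = \<gamma>\<bullet>g / \<parallel>\<gamma>\<parallel>\<^sup>2 > 0\<close>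
  (positivity because \<open>g\<close> is entrywise at least \<open>1 - \<rho> > 0\<close> and \<open>\<gamma>\<close> lies in the simplex), and then
  the \<open>\<gamma>\<close>-equation gives \<open>\<gamma> = 1 + e/c\<close>; substituting back into \<open>c \<parallel>\<gamma>\<parallel>\<^sup>2 = \<gamma>\<bullet>g\<close> and using
  \<open>e \<perp> 1\<close> leaves \<open>c m = m\<close>, i.e. \<open>c = 1\<close>.
  On \<open>\<real>\<^sup>n \<times> 1\<^sup>\<perp>\<close> the Hessian form is \<open>(m + \<parallel>e\<parallel>\<^sup>2)\<parallel>u\<^sub>1\<parallel>\<^sup>2 + 2(u\<^sub>1\<bullet>x)(e\<bullet>u\<^sub>2) + \<parallel>x\<parallel>\<^sup>2\<parallel>u\<^sub>2\<parallel>\<^sup>2\<close> (times \<open>1/m\<close>),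
  which by Cauchy--Schwarz is at least \<open>m\<parallel>u\<^sub>1\<parallel>\<^sup>2 + (\<parallel>e\<parallel>\<parallel>u\<^sub>1\<parallel> - \<parallel>x\<parallel>\<parallel>u\<^sub>2\<parallel>)\<^sup>2\<close>, positive unless \<open>u = 0\<close>.\<close>

lemma outer_mult_vector: "outer a b *v v = (b \<bullet> v) *\<^sub>R a"
  by (simp add: outer_def matrix_vector_mult_def vec_eq_iff inner_vec_def sum_distrib_left
      mult.commute mult.left_commute)

lemma scaleR_matrix_vector_mult: "((c::real) *\<^sub>R (M::real^'n^'m)) *v v = c *\<^sub>R (M *v v)"
  by (simp add: matrix_vector_mult_def vec_eq_iff sum_distrib_left mult.assoc)

lemma projP_mult_ones_perp:
  assumes "(v::real^'m) \<in> ones_perp"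
  shows "projP *v v = v"
proof -
  have "(\<Sum>i\<in>UNIV. v $ i) = 0"
    using assms by (simp add: ones_perp_def ones_def inner_vec_def)
  then have "(\<chi> i j. 1 / real CARD('m)) *v v = (0::real^'m)"
    by (simp add: matrix_vector_mult_def vec_eq_iff flip: sum_divide_distrib)
  then show ?thesis
    by (simp add: projP_def matrix_vector_mult_diff_rdistrib)
qed

lemma inner_ones_ones: "(ones::real^'m) \<bullet> ones = real CARD('m)"
  by (simp add: ones_def inner_vec_def)

lemma norm_ones_plus_perp:
  assumes "(e::real^'m) \<in> ones_perp"
  shows "(norm (ones + e))\<^sup>2 = real CARD('m) + (norm e)\<^sup>2"
  using assms
  by (simp add: ones_perp_def power2_norm_eq_inner inner_add_left inner_add_right inner_commute
      inner_ones_ones)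

lemma G_rho_lower_bound:
  assumes "g \<in> G_rho \<rho>"
  shows "1 - \<rho> \<le> g $ i"
proof -
  obtain e where "g = ones + e" and "\<bar>e $ i\<bar> \<le> \<rho>"
    using assms by (auto simp: G_rho_def)
  then show ?thesis
    by (simp add: ones_def)
qed

lemma G_rho_subset_Pi_plus:
  assumes "\<rho> \<le> 1"
  shows "G_rho \<rho> \<subseteq> (Pi_plus :: (real^'m) set)"
proof
  fix g :: "real^'m"
  assume g: "g \<in> G_rho \<rho>"
  then obtain e where "g = ones + e" "e \<in> ones_perp"
    by (auto simp: G_rho_def)
  then have "ones \<bullet> g = real CARD('m)"
    by (simp add: ones_perp_def inner_add_right inner_ones_ones)
  moreover have "0 \<le> g $ i" for i
    using G_rho_lower_bound[OF g, of i] assms by linarith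
  ultimately show "g \<in> Pi_plus"
    by (simp add: Pi_plus_def)
qed

lemma Pi_plus_inner_lower_bound:
  assumes "\<gamma> \<in> Pi_plus" and "\<And>i. a \<le> g $ i"
  shows "a * real CARD('m) \<le> \<gamma> \<bullet> (g::real^'m)"
proof -
  have "a * real CARD('m) = a * (ones \<bullet> \<gamma>)"
    using assms(1) by (simp add: Pi_plus_def)
  also have "\<dots> = (\<Sum>i\<in>UNIV. \<gamma> $ i * a)"
    by (simp add: ones_def inner_vec_def sum_distrib_left mult.commute)
  also have "\<dots> \<le> (\<Sum>i\<in>UNIV. \<gamma> $ i * g $ i)"
    using assms by (intro sum_mono mult_left_mono) (auto simp: Pi_plus_def)
  finally show ?thesis
    by (simp add: inner_vec_def)
qed

lemma stationary_point_unique: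
  fixes x \<xi> :: "real^'n" and \<gamma> e :: "real^'m"
  assumes "x \<noteq> 0" and e: "e \<in> ones_perp" and pos: "\<gamma> \<bullet> (ones + e) > 0"
    and grad: "grad_xi \<xi> \<gamma> x (ones + e) = 0"
    and proj_grad: "proj_grad_gamma \<xi> \<gamma> x (ones + e) = 0"
  shows "\<xi> = x \<and> \<gamma> = ones + e"
proof -
  define m where "m = real CARD('m)"
  define c where "c = \<gamma> \<bullet> (ones + e) / (norm \<gamma>)\<^sup>2"
  have "\<gamma> \<noteq> 0"
    using pos by auto
  then have norm_\<gamma>: "(norm \<gamma>)\<^sup>2 > 0"
    by simp
  then have "c > 0"
    using pos by (simp add: c_def)
  have "(norm \<gamma>)\<^sup>2 *\<^sub>R \<xi> = (\<gamma> \<bullet> (ones + e)) *\<^sub>R x"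
    using grad by (simp add: grad_xi_def)
  then have "(1 / (norm \<gamma>)\<^sup>2) *\<^sub>R ((norm \<gamma>)\<^sup>2 *\<^sub>R \<xi>) = c *\<^sub>R x"
    by (simp add: c_def)
  then have \<xi>: "\<xi> = c *\<^sub>R x"
    using norm_\<gamma> by simp
  have "(norm \<xi>)\<^sup>2 *\<^sub>R (\<gamma> - ones) = (\<xi> \<bullet> x) *\<^sub>R e"
    using proj_grad by (simp add: proj_grad_gamma_def)
  moreover have "(norm \<xi>)\<^sup>2 = c * c * (norm x)\<^sup>2"
    by (simp add: \<xi> power2_norm_eq_inner power2_eq_square algebra_simps)
  moreover have "\<xi> \<bullet> x = c * (norm x)\<^sup>2"
    by (simp add: \<xi> power2_norm_eq_inner)
  ultimately have "(c * (norm x)\<^sup>2) *\<^sub>R (c *\<^sub>R (\<gamma> - ones)) = (c * (norm x)\<^sup>2) *\<^sub>R e"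
    by (simp add: algebra_simps)
  moreover have "c * (norm x)\<^sup>2 \<noteq> 0"
    using \<open>c > 0\<close> \<open>x \<noteq> 0\<close> by simp
  ultimately have "c *\<^sub>R (\<gamma> - ones) = e"
    using scaleR_cancel_left by blast
  then have "(1 / c) *\<^sub>R e = \<gamma> - ones"
    using \<open>c > 0\<close> by auto
  then have \<gamma>: "\<gamma> = ones + (1 / c) *\<^sub>R e"
    by simp
  have e_perp: "ones \<bullet> e = 0"
    using e by (simp add: ones_perp_def)
  have "c * (norm \<gamma>)\<^sup>2 = \<gamma> \<bullet> (ones + e)"
    using norm_\<gamma> by (simp add: c_def)
  then have "c * (m + (e \<bullet> e) / (c * c)) = m + (e \<bullet> e) / c"
    by (simp add: \<gamma> m_def power2_norm_eq_inner inner_add_left inner_add_right inner_commute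
        e_perp inner_ones_ones)
  then have "c * m = m"
    using \<open>c > 0\<close> by (simp add: field_simps)
  then have "c = 1"
    by (simp add: m_def)
  then show ?thesis
    using \<xi> \<gamma> by simp
qed

lemma H_quad_ones_perp:
  fixes x u1 :: "real^'n" and g u2 :: "real^'m"
  assumes "u2 \<in> ones_perp"
  shows "H_quad x g u1 u2 = (1 / real CARD('m)) *
    ((norm g)\<^sup>2 * (norm u1)\<^sup>2 + 2 * (u1 \<bullet> x) * ((g - ones) \<bullet> u2) + (norm x)\<^sup>2 * (norm u2)\<^sup>2)"
  unfolding H_quad_def Let_def
  by (simp add: scaleR_matrix_vector_mult outer_mult_vector projP_mult_ones_perp[OF assms]
      power2_norm_eq_inner inner_commute algebra_simps)

lemma hessian_form_lower_bound:
  fixes x u1 :: "'a::real_inner" and e u2 :: "'b::real_inner"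
  shows "m * (norm u1)\<^sup>2 + (norm e * norm u1 - norm x * norm u2)\<^sup>2
    \<le> (m + (norm e)\<^sup>2) * (norm u1)\<^sup>2 + 2 * (u1 \<bullet> x) * (e \<bullet> u2) + (norm x)\<^sup>2 * (norm u2)\<^sup>2"
proof -
  have "\<bar>(u1 \<bullet> x) * (e \<bullet> u2)\<bar> \<le> (norm u1 * norm x) * (norm e * norm u2)"
    unfolding abs_mult by (intro mult_mono Cauchy_Schwarz_ineq2) auto
  then show ?thesis
    by (simp add: abs_le_iff power2_eq_square algebra_simps)
qed

lemma H_quad_pos:
  fixes x u1 :: "real^'n" and e u2 :: "real^'m"
  assumes "x \<noteq> 0" and e: "e \<in> ones_perp" and u2: "u2 \<in> ones_perp" and "(u1, u2) \<noteq> (0, 0)"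
  shows "H_quad x (ones + e) u1 u2 > 0"
proof -
  have "0 < real CARD('m) * (norm u1)\<^sup>2 + (norm e * norm u1 - norm x * norm u2)\<^sup>2"
    using assms(1,4) by (cases "u1 = 0") (auto intro: add_pos_nonneg)
  then show ?thesis
    using hessian_form_lower_bound[where m = "real CARD('m)" and e = e and ?u1.0 = u1 and x = x
        and ?u2.0 = u2]
    by (simp add: H_quad_ones_perp[OF u2] norm_ones_plus_perp[OF e])
qed

theorem mainTheorem1:
  fixes \<rho> :: real and x :: "real^'n" and g :: "real^'m"
  assumes "0 \<le> \<rho>" and "\<rho> < 1"
    and "x \<noteq> 0"
    and "g \<in> G_rho \<rho>"
  shows "(\<forall>\<xi> :: real^'n. \<forall>\<gamma> \<in> Pi_plus.
            (grad_xi \<xi> \<gamma> x g = 0 \<and> proj_grad_gamma \<xi> \<gamma> x g = 0) \<longleftrightarrow> (\<xi> = x \<and> \<gamma> = g))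
         \<and> g \<in> Pi_plus
         \<and> (\<forall>u1 :: real^'n. \<forall>u2 \<in> ones_perp. (u1, u2) \<noteq> (0, 0) \<longrightarrow> H_quad x g u1 u2 > 0)"
proof -
  obtain e where g: "g = ones + e" and e: "e \<in> ones_perp"
    using assms(4) by (auto simp: G_rho_def)
  have stationary: "(grad_xi \<xi> \<gamma> x g = 0 \<and> proj_grad_gamma \<xi> \<gamma> x g = 0) \<longleftrightarrow> (\<xi> = x \<and> \<gamma> = g)"
    if "\<gamma> \<in> Pi_plus" for \<xi> \<gamma>
  proof -
    have "0 < (1 - \<rho>) * real CARD('m)"
      using assms(2) by simp
    also have "\<dots> \<le> \<gamma> \<bullet> g"
      using Pi_plus_inner_lower_bound[OF that G_rho_lower_bound[OF assms(4)]] .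
    finally show ?thesis
      using stationary_point_unique[OF assms(3) e] g
      by (auto simp: grad_xi_def proj_grad_gamma_def power2_norm_eq_inner)
  qed
  have "g \<in> Pi_plus"
    using G_rho_subset_Pi_plus[of \<rho>] assms(2,4) by auto
  with stationary H_quad_pos[OF assms(3) e] show ?thesis
    by (auto simp: g)
qed

end
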